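(* Under the standing assumptions below, for every $x\in\mathcal X$, $s\in\mathcal S$, $\gamma\in\mathbb R^I_+$, the function $\tilde D$ satisfies $$\tilde D(\gamma,x,s)=\sup_{a\in\tilde{\mathcal A}(x,s)}\ \inf_{\lambda\in\mathbb R^I_+}\Big[r(x,a,s)+\sum_{i=1}^I\big(\gamma^ig^i(x,a,s)+\lambda^i(g^i(x,a,s)-\bar g^i)\big)+\beta\,\mathbb E_s\tilde D(\gamma+\lambda,x',s')\Big],\quad x'=\zeta(x,a,s).$$
   Context: Setup. Let $\mathcal S$ be a finite set and $(s_t)_{t\ge0}$ a Markov chain on $\mathcal S$ with transition probabilities $\pi(s'|s)>0$ for all $s,s'\in\mathcal S$; for a shock history $s^t=(s_0,\dots,s_t)\in\mathcal S^{t+1}$ write $\pi^t(s^t|s_0)$ for its probability given $s_0$, and $\mathbb E_{s_t}$ (equivalently $\mathbb E_{s^t}$) for expectation over future shocks conditional on the history $s^t$. Let $\mathcal A\subset\mathbb R^n$ be a finite set, $\mathcal X\subseteq\mathbb R^m$ a countable set, $\zeta:\mathcal X\times\mathcal A\times\mathcal S\to\mathcal X$, $p:\mathcal X\times\mathcal A\times\mathcal S\to\mathbb R$, $r,g^1,\dots,g^I:\mathcal X\times\mathcal A\times\mathcal S\to\mathbb R$ bounded functions, $\bar g^1,\dots,\bar g^I\in\mathbb R$ constants and $\beta\in(0,1)$. A plan is a family $a=(a(s^t))_{t\ge0,\,s^t\in\mathcal S^{t+1}}$ with $a(s^t)\in\mathcal A$; given $x_0\in\mathcal X$ it induces states $x(s^0)=x_0$,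 $x(s^{t+1})=\zeta(x(s^t),a(s^t),s_t)$. Let $\tilde{\mathcal A}(x,s)=\{a\in\mathcal A:p(x,a,s)\ge0\}$ and let $\tilde{\mathcal A}^\infty(x_0)$ be the set of plans with $a(s^t)\in\tilde{\mathcal A}(x(s^t),s_t)$ for all $t,s^t$. A plan is feasible for $(x_0,s_0)$ if it lies in $\tilde{\mathcal A}^\infty(x_0)$ and satisfies the forward-looking constraints $\mathbb E_{s_t}\sum_{n=0}^\infty\beta^ng^i(x(s^{t+n}),a(s^{t+n}),s_{t+n})\ge\bar g^i$ for all $t$, $s^t$, $i$. Standing assumption: for every $x_0\in\mathcal X$, $s_0\in\mathcal S$ a feasible plan exists. Post-action histories: $\tilde{\mathcal H}^t=\mathcal S^{t+1}\times\mathcal A^{t+1}$ with elements $\tilde h^t=(s_0,a_0,\dots,s_t,a_t)$; along $s^t$ a plan generates $\tilde h^t=(s_0,a(s^0),\dots,s_t,a(s^t))$. $\tilde\Lambda$ is the set of families $(\lambda^i(\tilde h^t))_{t,\tilde h^t\in\tilde{\mathcal H}^t,i}$ with $\lambda^i(\tilde h^t)\ge0$ and $\sum_t\sum_{\tilde h^t}\sum_i\beta^t\lambda^i(\tilde h^t)\pi^t(s^t|s_0)<\infty$. For $\gamma\in\mathbb R^I_+$, $\tilde L(a,\lambda;\gamma,x_0,s_0)=\mathbb E_{s_0}\sum_{t\ge0}\beta^t\Big[r(x(s^t),a(s^t),s_t)+\sum_i\gamma^ig^i(x(s^t),a(s^t),s_t)+\sum_i\lambda^i(\tilde h^t)\Big(\sum_{n\ge0}\beta^ng^i(x(s^{t+n}),a(s^{t+n}),s_{t+n})-\bar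 g^i\Big)\Big]$ with $\tilde h^t$ generated by the plan, and $\tilde D(\gamma,x_0,s_0)=\inf_{\lambda\in\tilde\Lambda}\sup_{a\in\tilde{\mathcal A}^\infty(x_0)}\tilde L(a,\lambda;\gamma,x_0,s_0)$. *)

theory Defs
  imports Complex_Main "HOL-Library.Extended_Real" "HOL-Library.Countable_Set"
begin

text \<open>Transition probabilities: Pr s s' = pi(s' | s).
  A shock history s^t = (s_0,...,s_t) is a list of length t+1.
  Actions: an abstract type 'act with the finite action set Act.
  Constraint index set {1..I}: a finite type 'i; gamma, lambda in R^I_+ are
  functions 'i => real with nonnegative values.
  A plan is a function from (nonempty) shock histories to actions.\<close>

definition hprob :: "('s \<Rightarrow> 's \<Rightarrow> real) \<Rightarrow> 's \<Rightarrow> 's list \<Rightarrow> real" where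
  "hprob Pr s0 h =
     (if h \<noteq> [] \<and> hd h = s0 then (\<Prod>k<length h - 1. Pr (h ! k) (h ! Suc k)) else 0)"

definition cexp :: "('s \<Rightarrow> 's \<Rightarrow> real) \<Rightarrow> 's list \<Rightarrow> nat \<Rightarrow> ('s list \<Rightarrow> real) \<Rightarrow> real" where
  "cexp Pr h n f = (\<Sum>e\<in>{e. length e = n}. hprob Pr (last h) (last h # e) * f (h @ e))"

primrec st_aux :: "('x \<Rightarrow> 'act \<Rightarrow> 's \<Rightarrow> 'x) \<Rightarrow> ('s list \<Rightarrow> 'act) \<Rightarrow> 'x \<Rightarrow> 's list \<Rightarrow> nat \<Rightarrow> 'x" where
  "st_aux zeta a x0 h 0 = x0"
| "st_aux zeta a x0 h (Suc k) = zeta (st_aux zeta a x0 h k) (a (take (Suc k) h)) (h ! k)"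

definition xst :: "('x \<Rightarrow> 'act \<Rightarrow> 's \<Rightarrow> 'x) \<Rightarrow> ('s list \<Rightarrow> 'act) \<Rightarrow> 'x \<Rightarrow> 's list \<Rightarrow> 'x" where
  "xst zeta a x0 h = st_aux zeta a x0 h (length h - 1)"

definition phist :: "('s list \<Rightarrow> 'act) \<Rightarrow> 's list \<Rightarrow> ('s \<times> 'act) list" where
  "phist a h = map (\<lambda>k. (h ! k, a (take (Suc k) h))) [0..<length h]"

definition flow :: "('x \<Rightarrow> 'act \<Rightarrow> 's \<Rightarrow> 'x) \<Rightarrow> ('s list \<Rightarrow> 'act) \<Rightarrow> 'x \<Rightarrow>
    ('x \<Rightarrow> 'act \<Rightarrow> 's \<Rightarrow> real) \<Rightarrow> 's list \<Rightarrow> real" where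
  "flow zeta a x0 f h = f (xst zeta a x0 h) (a h) (last h)"

definition contval :: "('s \<Rightarrow> 's \<Rightarrow> real) \<Rightarrow> real \<Rightarrow> ('x \<Rightarrow> 'act \<Rightarrow> 's \<Rightarrow> 'x) \<Rightarrow>
    ('s list \<Rightarrow> 'act) \<Rightarrow> 'x \<Rightarrow> ('x \<Rightarrow> 'act \<Rightarrow> 's \<Rightarrow> real) \<Rightarrow> 's list \<Rightarrow> real" where
  "contval Pr beta zeta a x0 f h = (\<Sum>n. beta ^ n * cexp Pr h n (flow zeta a x0 f))"

definition plans :: "'act set \<Rightarrow> ('x \<Rightarrow> 'act \<Rightarrow> 's \<Rightarrow> 'x) \<Rightarrow> ('x \<Rightarrow> 'act \<Rightarrow> 's \<Rightarrow> real) \<Rightarrow>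
    'x \<Rightarrow> ('s list \<Rightarrow> 'act) set" where
  "plans Act zeta p x0 =
     {a. \<forall>h. h \<noteq> [] \<longrightarrow> a h \<in> Act \<and> p (xst zeta a x0 h) (a h) (last h) \<ge> 0}"

definition feasible :: "('s \<Rightarrow> 's \<Rightarrow> real) \<Rightarrow> real \<Rightarrow> 'act set \<Rightarrow> ('x \<Rightarrow> 'act \<Rightarrow> 's \<Rightarrow> 'x) \<Rightarrow>
    ('x \<Rightarrow> 'act \<Rightarrow> 's \<Rightarrow> real) \<Rightarrow> ('i \<Rightarrow> 'x \<Rightarrow> 'act \<Rightarrow> 's \<Rightarrow> real) \<Rightarrow> ('i \<Rightarrow> real) \<Rightarrow>
    'x \<Rightarrow> 's \<Rightarrow> ('s list \<Rightarrow> 'act) \<Rightarrow> bool" where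
  "feasible Pr beta Act zeta p g gbar x0 s0 a \<longleftrightarrow>
     a \<in> plans Act zeta p x0 \<and>
     (\<forall>h i. h \<noteq> [] \<and> hd h = s0 \<longrightarrow> contval Pr beta zeta a x0 (g i) h \<ge> gbar i)"

definition mults :: "('s \<Rightarrow> 's \<Rightarrow> real) \<Rightarrow> real \<Rightarrow> 'act set \<Rightarrow> 's \<Rightarrow>
    (('s \<times> 'act) list \<Rightarrow> 'i::finite \<Rightarrow> real) set" where
  "mults Pr beta Act s0 =
     {lam. (\<forall>ht i. lam ht i \<ge> 0) \<and>
       summable (\<lambda>t. beta ^ t *
          (\<Sum>ht\<in>{ht. length ht = Suc t \<and> set ht \<subseteq> UNIV \<times> Act}.
              \<Sum>i\<in>UNIV. lam ht i * hprob Pr s0 (map fst ht)))}"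

text \<open>The expectation
  E_{s0} of the t-th summand is taken over s^t; the term involving the future
  sum is expressed through its conditional expectation given s^t.\<close>
definition lagr :: "('s \<Rightarrow> 's \<Rightarrow> real) \<Rightarrow> real \<Rightarrow> ('x \<Rightarrow> 'act \<Rightarrow> 's \<Rightarrow> 'x) \<Rightarrow>
    ('x \<Rightarrow> 'act \<Rightarrow> 's \<Rightarrow> real) \<Rightarrow> ('i::finite \<Rightarrow> 'x \<Rightarrow> 'act \<Rightarrow> 's \<Rightarrow> real) \<Rightarrow> ('i \<Rightarrow> real) \<Rightarrow>
    ('s list \<Rightarrow> 'act) \<Rightarrow> (('s \<times> 'act) list \<Rightarrow> 'i \<Rightarrow> real) \<Rightarrow> ('i \<Rightarrow> real) \<Rightarrow> 'x \<Rightarrow> 's \<Rightarrow> real" where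
  "lagr Pr beta zeta r g gbar a lam gam x0 s0 =
     (\<Sum>t. beta ^ t * cexp Pr [s0] t (\<lambda>h.
         flow zeta a x0 r h
         + (\<Sum>i\<in>UNIV. gam i * flow zeta a x0 (g i) h)
         + (\<Sum>i\<in>UNIV. lam (phist a h) i * (contval Pr beta zeta a x0 (g i) h - gbar i))))"

definition Dtil :: "('s \<Rightarrow> 's \<Rightarrow> real) \<Rightarrow> real \<Rightarrow> 'act set \<Rightarrow> ('x \<Rightarrow> 'act \<Rightarrow> 's \<Rightarrow> 'x) \<Rightarrow>
    ('x \<Rightarrow> 'act \<Rightarrow> 's \<Rightarrow> real) \<Rightarrow> ('x \<Rightarrow> 'act \<Rightarrow> 's \<Rightarrow> real) \<Rightarrow>
    ('i::finite \<Rightarrow> 'x \<Rightarrow> 'act \<Rightarrow> 's \<Rightarrow> real) \<Rightarrow> ('i \<Rightarrow> real) \<Rightarrow>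
    ('i \<Rightarrow> real) \<Rightarrow> 'x \<Rightarrow> 's \<Rightarrow> ereal" where
  "Dtil Pr beta Act zeta p r g gbar gam x0 s0 =
     (INF lam\<in>mults Pr beta Act s0. SUP a\<in>plans Act zeta p x0.
        ereal (lagr Pr beta zeta r g gbar a lam gam x0 s0))"

end

theory Submission
  imports Defs
begin

text \<open>Splitting off the first period, the Lagrangian of a plan and a multiplier family equals the
  stage Lagrangian plus \<open>beta\<close> times the expected Lagrangian of the continuation plan and the
  continuation multipliers, with \<open>gam\<close> replaced by \<open>gam + lam(s, a(s))\<close>. Existence of feasible
  plans makes \<open>D\<close> finite, so both inequalities can be proved with \<open>\<epsilon>\<close>-optimal pieces. For
  \<open>\<ge>\<close>, given multipliers and a first action, paste nearly optimal continuation plans behind the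
  action. For \<open>\<le>\<close>, paste, for every first action, a first-period multiplier nearly attaining
  the inner infimum with nearly optimal continuation multipliers; the pasted family is again
  admissible because its discounted mass is bounded by that of its finitely many pieces.\<close>

section \<open>Histories and conditional expectations\<close>

lemma lists_of_length_Suc:
  "{e. length e = Suc n} = (\<lambda>(s, e). s # e) ` (UNIV \<times> {e. length e = n})"
proof -
  have "e \<in> (\<lambda>(s, e). s # e) ` (UNIV \<times> {e. length e = n})" if "length e = Suc n" for e
    using that by (cases e) auto
  then show ?thesis by auto
qed

lemma hprob_singleton [simp]: "hprob Pr s0 [s0] = 1"
  by (simp add: hprob_def)

lemma hprob_Cons:
  "l \<noteq> [] \<Longrightarrow> hprob Pr s0 (s1 # l) = (if s1 = s0 then Pr s0 (hd l) * hprob Pr (hd l) l else 0)"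
  unfolding hprob_def
  by (cases l) (simp_all del: prod.lessThan_Suc add: prod.lessThan_Suc_shift)

lemma cexp_0 [simp]: "cexp Pr h 0 f = f h"
proof -
  have "{e::'a list. length e = 0} = {[]}" by auto
  then show ?thesis by (simp add: cexp_def)
qed

lemma cexp_singleton_Suc:
  fixes s0 :: "'s::finite"
  shows "cexp Pr [s0] (Suc t) f = (\<Sum>s'\<in>UNIV. Pr s0 s' * cexp Pr [s'] t (\<lambda>h. f (s0 # h)))"
proof -
  have inj: "inj_on (\<lambda>(s::'s, e). s # e) (UNIV \<times> {e. length e = t})"
    by (auto simp: inj_on_def)
  have "cexp Pr [s0] (Suc t) f = (\<Sum>e\<in>{e. length e = Suc t}. hprob Pr s0 (s0 # e) * f (s0 # e))"
    by (simp add: cexp_def)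
  also have "\<dots> = (\<Sum>(s', e)\<in>UNIV \<times> {e. length e = t}. hprob Pr s0 (s0 # s' # e) * f (s0 # s' # e))"
    unfolding lists_of_length_Suc by (subst sum.reindex[OF inj]) (simp add: case_prod_unfold)
  also have "\<dots> = (\<Sum>s'\<in>UNIV. \<Sum>e\<in>{e. length e = t}. hprob Pr s0 (s0 # s' # e) * f (s0 # s' # e))"
    by (subst sum.cartesian_product[symmetric]) simp
  also have "\<dots> = (\<Sum>s'\<in>UNIV. Pr s0 s' * cexp Pr [s'] t (\<lambda>h. f (s0 # h)))"
    by (simp add: cexp_def hprob_Cons sum_distrib_left mult.assoc)
  finally show ?thesis .
qed

lemma cexp_Cons: "h \<noteq> [] \<Longrightarrow> cexp Pr (s # h) n f = cexp Pr h n (\<lambda>k. f (s # k))"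
  by (simp add: cexp_def)

lemma cexp_cong:
  "(\<And>e. length e = n \<Longrightarrow> f (h @ e) = f' (h @ e)) \<Longrightarrow> cexp Pr h n f = cexp Pr h n f'"
  unfolding cexp_def by (rule sum.cong) auto

lemma cexp_add: "cexp Pr h n (\<lambda>k. f k + f' k) = cexp Pr h n f + cexp Pr h n f'"
  unfolding cexp_def by (simp add: distrib_left sum.distrib)

lemma cexp_sum: "cexp Pr h n (\<lambda>k. \<Sum>i\<in>I. f i k) = (\<Sum>i\<in>I. cexp Pr h n (f i))"
  unfolding cexp_def by (simp add: sum_distrib_left sum.swap[of _ I])

lemma cexp_cmult: "cexp Pr h n (\<lambda>k. c * f k) = c * cexp Pr h n f"
  unfolding cexp_def by (simp add: sum_distrib_left mult.left_commute)

lemma cexp_zero [simp]: "cexp Pr h n (\<lambda>k. 0) = 0"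
  unfolding cexp_def by simp

locale markov_kernel =
  fixes Pr :: "'s::finite \<Rightarrow> 's \<Rightarrow> real"
  assumes Pr_pos: "\<And>s s'. 0 < Pr s s'"
    and Pr_sum: "\<And>s. (\<Sum>s'\<in>UNIV. Pr s s') = 1"
begin

lemma Pr_le_1: "Pr s s' \<le> 1"
  using member_le_sum[of s' UNIV "Pr s"] Pr_pos Pr_sum by (simp add: less_imp_le)

lemma hprob_nonneg: "0 \<le> hprob Pr s0 h"
  unfolding hprob_def by (auto intro!: prod_pos less_imp_le Pr_pos)

lemma hprob_Cons_ge: "Pr s0 s' * hprob Pr s' l \<le> hprob Pr s0 (s0 # l)"
proof (cases "l \<noteq> [] \<and> hd l = s'")
  case True
  then show ?thesis by (simp add: hprob_Cons)
next
  case False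
  then have "hprob Pr s' l = 0" by (auto simp: hprob_def)
  then show ?thesis using hprob_nonneg by simp
qed

lemma hprob_Cons_le: "l \<noteq> [] \<Longrightarrow> hprob Pr s0 (s1 # l) \<le> hprob Pr (hd l) l"
  using mult_right_mono[OF Pr_le_1 hprob_nonneg] by (simp add: hprob_Cons hprob_nonneg)

lemma cexp_const: "cexp Pr h n (\<lambda>_. c) = c"
proof -
  have "cexp Pr [s0] n (\<lambda>_. 1) = 1" for s0
    by (induction n arbitrary: s0) (simp_all add: cexp_singleton_Suc Pr_sum)
  then have "cexp Pr h n (\<lambda>_. 1) = 1"
    by (simp add: cexp_def)
  then show ?thesis
    using cexp_cmult[of Pr h n c "\<lambda>_. 1"] by simp
qed

lemma cexp_mono:
  "(\<And>e. length e = n \<Longrightarrow> f (h @ e) \<le> f' (h @ e)) \<Longrightarrow> cexp Pr h n f \<le> cexp Pr h n f'"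
  unfolding cexp_def by (intro sum_mono mult_left_mono hprob_nonneg) auto

lemma cexp_nonneg: "(\<And>e. length e = n \<Longrightarrow> 0 \<le> f (h @ e)) \<Longrightarrow> 0 \<le> cexp Pr h n f"
  using cexp_mono[of n "\<lambda>_. 0" h f] by simp

lemma cexp_abs_le:
  assumes "\<And>e. length e = n \<Longrightarrow> \<bar>f (h @ e)\<bar> \<le> f' (h @ e)"
  shows "\<bar>cexp Pr h n f\<bar> \<le> cexp Pr h n f'"
proof -
  have "cexp Pr h n f \<le> cexp Pr h n f'" and "cexp Pr h n (\<lambda>k. - f' k) \<le> cexp Pr h n f"
    using assms by (auto intro!: cexp_mono simp: abs_le_iff minus_le_iff)
  then show ?thesis using cexp_cmult[of Pr h n "- 1" f'] by simp
qed

lemma expectation_le_add: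
  assumes "\<And>s'. u s' \<le> v s' + d"
  shows "(\<Sum>s'\<in>UNIV. Pr s s' * u s') \<le> (\<Sum>s'\<in>UNIV. Pr s s' * v s') + d"
proof -
  have "(\<Sum>s'\<in>UNIV. Pr s s' * u s') \<le> (\<Sum>s'\<in>UNIV. Pr s s' * (v s' + d))"
    by (intro sum_mono mult_left_mono assms less_imp_le[OF Pr_pos])
  also have "\<dots> = (\<Sum>s'\<in>UNIV. Pr s s' * v s') + d"
    by (simp add: distrib_left sum.distrib sum_distrib_right[symmetric] Pr_sum)
  finally show ?thesis .
qed

end

lemma discounted_sum_Suc:
  fixes Pr :: "'s::finite \<Rightarrow> 's \<Rightarrow> real" and beta :: real
  assumes u: "\<And>t. u (Suc t) = (\<Sum>s'\<in>UNIV. Pr s s' * v s' t)"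
    and v: "\<And>s'. summable (\<lambda>t. beta ^ t * v s' t)"
  shows "summable (\<lambda>t. beta ^ t * u t)"
    and "(\<Sum>t. beta ^ t * u t) = u 0 + beta * (\<Sum>s'\<in>UNIV. Pr s s' * (\<Sum>t. beta ^ t * v s' t))"
proof -
  have "beta ^ Suc t * u (Suc t) = (\<Sum>s'\<in>UNIV. (beta * Pr s s') * (beta ^ t * v s' t))" for t
    by (simp add: u sum_distrib_left algebra_simps)
  moreover have "(\<lambda>t. \<Sum>s'\<in>UNIV. (beta * Pr s s') * (beta ^ t * v s' t)) sums
      (\<Sum>s'\<in>UNIV. (beta * Pr s s') * (\<Sum>t. beta ^ t * v s' t))"
    by (intro sums_sum sums_mult summable_sums v)
  ultimately have "(\<lambda>t. beta ^ Suc t * u (Suc t)) sums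
      (beta * (\<Sum>s'\<in>UNIV. Pr s s' * (\<Sum>t. beta ^ t * v s' t)))"
    by (simp add: sum_distrib_left mult.assoc)
  then have "(\<lambda>t. beta ^ t * u t) sums
      (beta * (\<Sum>s'\<in>UNIV. Pr s s' * (\<Sum>t. beta ^ t * v s' t)) + beta ^ 0 * u 0)"
    by (subst sums_Suc_iff[symmetric]) simp
  then show "summable (\<lambda>t. beta ^ t * u t)"
    and "(\<Sum>t. beta ^ t * u t) = u 0 + beta * (\<Sum>s'\<in>UNIV. Pr s s' * (\<Sum>t. beta ^ t * v s' t))"
    by (auto simp: sums_iff)
qed

lemma discounted_sum_bounded:
  fixes beta :: real
  assumes "0 \<le> beta" "beta < 1" and "\<And>n. \<bar>c n\<bar> \<le> B"
  shows "summable (\<lambda>n. beta ^ n * c n)" and "\<bar>\<Sum>n. beta ^ n * c n\<bar> \<le> B / (1 - beta)"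
proof -
  have geom: "(\<lambda>n. B * beta ^ n) sums (B / (1 - beta))"
    using sums_mult[OF geometric_sums, of beta B] assms(1,2) by simp
  have le: "norm (beta ^ n * c n) \<le> B * beta ^ n" for n
    using mult_right_mono[OF assms(3)[of n] zero_le_power[OF assms(1), of n]] assms(1)
    by (simp add: abs_mult mult.commute)
  have norm_summable: "summable (\<lambda>n. norm (beta ^ n * c n))"
    by (rule summable_comparison_test[OF _ sums_summable[OF geom]]) (use le in auto)
  then show "summable (\<lambda>n. beta ^ n * c n)"
    by (rule summable_norm_cancel)
  have "norm (\<Sum>n. beta ^ n * c n) \<le> (\<Sum>n. norm (beta ^ n * c n))"
    by (rule summable_norm[OF norm_summable])
  also have "\<dots> \<le> (\<Sum>n. B * beta ^ n)"
    by (rule suminf_le[OF le norm_summable sums_summable[OF geom]])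
  finally show "\<bar>\<Sum>n. beta ^ n * c n\<bar> \<le> B / (1 - beta)"
    using sums_unique[OF geom] by simp
qed

lemma summable_discounted_if_le_Suc:
  fixes beta c :: real
  assumes "0 < beta" "\<And>t. 0 \<le> u t" "\<And>t. u t \<le> c * v (Suc t)"
    and "summable (\<lambda>t. beta ^ t * v t)"
  shows "summable (\<lambda>t. beta ^ t * u t)"
proof (rule summable_comparison_test)
  show "summable (\<lambda>t. c / beta * (beta ^ Suc t * v (Suc t)))"
    by (intro summable_mult) (simp only: summable_Suc_iff[of "\<lambda>t. beta ^ t * v t"] assms(4))
  show "\<exists>N. \<forall>t\<ge>N. norm (beta ^ t * u t) \<le> c / beta * (beta ^ Suc t * v (Suc t))"
    using assms(1-3) by (auto intro!: mult_left_mono simp: abs_mult)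
qed

lemma summable_discounted_if_Suc_le:
  fixes beta c :: real
  assumes "0 \<le> beta" "\<And>t. 0 \<le> u t" "\<And>t. u (Suc t) \<le> c * v t"
    and "summable (\<lambda>t. beta ^ t * v t)"
  shows "summable (\<lambda>t. beta ^ t * u t)"
proof -
  have "summable (\<lambda>t. beta ^ Suc t * u (Suc t))"
  proof (rule summable_comparison_test)
    show "summable (\<lambda>t. beta * c * (beta ^ t * v t))"
      using assms(4) by (rule summable_mult)
    show "\<exists>N. \<forall>t\<ge>N. norm (beta ^ Suc t * u (Suc t)) \<le> beta * c * (beta ^ t * v t)"
      using assms(1-3) mult_left_mono[OF assms(3), of "beta ^ Suc _"]
      by (auto simp: abs_mult mult_ac)
  qed
  then show ?thesis by (simp only: summable_Suc_iff[of "\<lambda>t. beta ^ t * u t"])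
qed

section \<open>Continuation and pasting of plans and multipliers\<close>

definition shift_plan :: "('s list \<Rightarrow> 'act) \<Rightarrow> 's \<Rightarrow> 's list \<Rightarrow> 'act" where
  "shift_plan a s h = a (s # h)"

definition shift_mult ::
    "(('s \<times> 'act) list \<Rightarrow> 'i \<Rightarrow> real) \<Rightarrow> 's \<times> 'act \<Rightarrow> ('s \<times> 'act) list \<Rightarrow> 'i \<Rightarrow> real" where
  "shift_mult lam sa ht = lam (sa # ht)"

lemma st_aux_cong:
  "(\<And>k. k < n \<Longrightarrow> a (take (Suc k) h) = b (take (Suc k) h)) \<Longrightarrow>
    st_aux zeta a x0 h n = st_aux zeta b x0 h n"
  by (induction n) auto

lemma st_aux_Cons:
  "st_aux zeta a x0 (s # h) (Suc n) = st_aux zeta (shift_plan a s) (zeta x0 (a [s]) s) h n"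
  by (induction n) (auto simp: shift_plan_def)

lemma xst_singleton [simp]: "xst zeta a x0 [s] = x0"
  by (simp add: xst_def)

lemma xst_Cons:
  "h \<noteq> [] \<Longrightarrow> xst zeta a x0 (s # h) = xst zeta (shift_plan a s) (zeta x0 (a [s]) s) h"
  unfolding xst_def using st_aux_Cons[of zeta a x0 s h "length h - 1"] by (cases h) auto

lemma flow_singleton [simp]: "flow zeta a x0 f [s] = f x0 (a [s]) s"
  by (simp add: flow_def)

lemma flow_Cons:
  "h \<noteq> [] \<Longrightarrow> flow zeta a x0 f (s # h) = flow zeta (shift_plan a s) (zeta x0 (a [s]) s) f h"
  by (simp add: flow_def xst_Cons shift_plan_def)

lemma contval_Cons:
  assumes "h \<noteq> []"
  shows "contval Pr beta zeta a x0 f (s # h) =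
    contval Pr beta zeta (shift_plan a s) (zeta x0 (a [s]) s) f h"
proof -
  have "cexp Pr h n (\<lambda>k. flow zeta a x0 f (s # k)) =
      cexp Pr h n (flow zeta (shift_plan a s) (zeta x0 (a [s]) s) f)" for n
    by (rule cexp_cong) (simp add: flow_Cons assms)
  then show ?thesis unfolding contval_def by (simp add: cexp_Cons assms)
qed

lemma phist_singleton [simp]: "phist a [s] = [(s, a [s])]"
  by (simp add: phist_def)

lemma phist_Cons: "phist a (s # h) = (s, a [s]) # phist (shift_plan a s) h"
  unfolding phist_def shift_plan_def
  by (simp add: upt_conv_Cons map_Suc_upt[symmetric] del: upt_Suc)

lemma map_fst_phist [simp]: "map fst (phist a h) = h"
  unfolding phist_def by (simp add: comp_def map_nth[unfolded comp_def])

lemma xst_cong: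
  assumes "h \<noteq> []" "\<And>h'. h' \<noteq> [] \<Longrightarrow> hd h' = hd h \<Longrightarrow> a h' = b h'"
  shows "xst zeta a x0 h = xst zeta b x0 h"
  unfolding xst_def using assms by (intro st_aux_cong) (auto simp: hd_take neq_Nil_conv)

lemma phist_cong:
  assumes "h \<noteq> []" "\<And>h'. h' \<noteq> [] \<Longrightarrow> hd h' = hd h \<Longrightarrow> a h' = b h'"
  shows "phist a h = phist b h"
  unfolding phist_def using assms by (auto simp: hd_take neq_Nil_conv)

lemma flow_cong:
  assumes "h \<noteq> []" "\<And>h'. h' \<noteq> [] \<Longrightarrow> hd h' = hd h \<Longrightarrow> a h' = b h'"
  shows "flow zeta a x0 f h = flow zeta b x0 f h"
proof -
  have "xst zeta a x0 h = xst zeta b x0 h" by (rule xst_cong[OF assms])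
  then show ?thesis unfolding flow_def using assms by simp
qed

lemma contval_cong:
  assumes "h \<noteq> []" "\<And>h'. h' \<noteq> [] \<Longrightarrow> hd h' = hd h \<Longrightarrow> a h' = b h'"
  shows "contval Pr beta zeta a x0 f h = contval Pr beta zeta b x0 f h"
proof -
  have "cexp Pr h n (flow zeta a x0 f) = cexp Pr h n (flow zeta b x0 f)" for n
    using assms by (intro cexp_cong flow_cong) auto
  then show ?thesis unfolding contval_def by simp
qed

lemma lagr_cong_plan:
  assumes "\<And>h. h \<noteq> [] \<Longrightarrow> hd h = s0 \<Longrightarrow> a h = b h"
  shows "lagr Pr beta zeta r g gbar a lam gam x0 s0 = lagr Pr beta zeta r g gbar b lam gam x0 s0"
proof -
  have "flow zeta a x0 f (s0 # e) = flow zeta b x0 f (s0 # e)"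
    and "phist a (s0 # e) = phist b (s0 # e)"
    and "contval Pr beta zeta a x0 f (s0 # e) = contval Pr beta zeta b x0 f (s0 # e)" for f e
    using assms by (auto intro!: flow_cong phist_cong contval_cong)
  then show ?thesis
    unfolding lagr_def by (intro arg_cong[where f=suminf] ext arg_cong2[where f="(*)"] refl cexp_cong) simp
qed

lemma lagr_cong_mult:
  assumes "\<And>ht. ht \<noteq> [] \<Longrightarrow> fst (hd ht) = s0 \<Longrightarrow> lam ht = lam' ht"
  shows "lagr Pr beta zeta r g gbar a lam gam x0 s0 = lagr Pr beta zeta r g gbar a lam' gam x0 s0"
  unfolding lagr_def
  by (intro arg_cong[where f=suminf] ext arg_cong2[where f="(*)"] refl cexp_cong)
    (simp add: assms phist_Cons)

text \<open>The fallback plan \<open>c\<close> on histories not starting in \<open>s0\<close> only serves to make the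
  pasted plan admissible.\<close>

definition paste_plan ::
    "'s \<Rightarrow> 'act \<Rightarrow> ('s \<Rightarrow> 's list \<Rightarrow> 'act) \<Rightarrow> ('s list \<Rightarrow> 'act) \<Rightarrow> 's list \<Rightarrow> 'act" where
  "paste_plan s0 a0 b c h = (case h of
      [] \<Rightarrow> c []
    | [s1] \<Rightarrow> if s1 = s0 then a0 else c h
    | s1 # s2 # rest \<Rightarrow> if s1 = s0 then b s2 (s2 # rest) else c h)"

lemma paste_plan_singleton [simp]: "paste_plan s0 a0 b c [s0] = a0"
  by (simp add: paste_plan_def)

lemma paste_plan_Cons: "h \<noteq> [] \<Longrightarrow> paste_plan s0 a0 b c (s0 # h) = b (hd h) h"
  by (cases h) (auto simp: paste_plan_def)

lemma paste_plan_other: "h \<noteq> [] \<Longrightarrow> hd h \<noteq> s0 \<Longrightarrow> paste_plan s0 a0 b c h = c h"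
  by (cases h rule: remdups_adj.cases) (auto simp: paste_plan_def)

definition paste_mult ::
    "('act \<Rightarrow> 'i \<Rightarrow> real) \<Rightarrow> ('act \<Rightarrow> 's \<Rightarrow> ('s \<times> 'act) list \<Rightarrow> 'i \<Rightarrow> real) \<Rightarrow>
    ('s \<times> 'act) list \<Rightarrow> 'i \<Rightarrow> real" where
  "paste_mult l0 Lam ht = (case ht of
      [] \<Rightarrow> (\<lambda>_. 0)
    | [sa] \<Rightarrow> l0 (snd sa)
    | sa # sb # rest \<Rightarrow> Lam (snd sa) (fst sb) (sb # rest))"

lemma paste_mult_singleton [simp]: "paste_mult l0 Lam [sa] = l0 (snd sa)"
  by (simp add: paste_mult_def)

lemma paste_mult_Cons: "ht \<noteq> [] \<Longrightarrow> paste_mult l0 Lam (sa # ht) = Lam (snd sa) (fst (hd ht)) ht"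
  by (cases ht) (auto simp: paste_mult_def)

lemma paste_mult_nonneg:
  "(\<And>a i. 0 \<le> l0 a i) \<Longrightarrow> (\<And>a s ht i. 0 \<le> Lam a s ht i) \<Longrightarrow> 0 \<le> paste_mult l0 Lam ht i"
  by (cases ht rule: remdups_adj.cases) (auto simp: paste_mult_def)

section \<open>The constrained dynamic program\<close>

locale constrained_dp = markov_kernel Pr for Pr :: "'s::finite \<Rightarrow> 's \<Rightarrow> real" +
  fixes beta :: real
    and Act :: "'act set"
    and X :: "'x set"
    and zeta :: "'x \<Rightarrow> 'act \<Rightarrow> 's \<Rightarrow> 'x"
    and p r :: "'x \<Rightarrow> 'act \<Rightarrow> 's \<Rightarrow> real"
    and g :: "'i::finite \<Rightarrow> 'x \<Rightarrow> 'act \<Rightarrow> 's \<Rightarrow> real"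
    and gbar :: "'i \<Rightarrow> real"
  assumes Act_finite: "finite Act"
    and zeta_X: "\<And>x a s. x \<in> X \<Longrightarrow> a \<in> Act \<Longrightarrow> zeta x a s \<in> X"
    and beta_pos: "0 < beta" and beta_less_1: "beta < 1"
    and r_bounded: "\<exists>B. \<forall>x\<in>X. \<forall>a\<in>Act. \<forall>s. \<bar>r x a s\<bar> \<le> B"
    and g_bounded: "\<And>i. \<exists>B. \<forall>x\<in>X. \<forall>a\<in>Act. \<forall>s. \<bar>g i x a s\<bar> \<le> B"
    and feasible_exists: "\<And>x0 s0. x0 \<in> X \<Longrightarrow> \<exists>a. feasible Pr beta Act zeta p g gbar x0 s0 a"
begin

abbreviation Plans :: "'x \<Rightarrow> ('s list \<Rightarrow> 'act) set" where
  "Plans x0 \<equiv> plans Act zeta p x0"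

abbreviation Mults :: "'s \<Rightarrow> (('s \<times> 'act) list \<Rightarrow> 'i \<Rightarrow> real) set" where
  "Mults s0 \<equiv> mults Pr beta Act s0"

abbreviation CV ::
    "('s list \<Rightarrow> 'act) \<Rightarrow> 'x \<Rightarrow> ('x \<Rightarrow> 'act \<Rightarrow> 's \<Rightarrow> real) \<Rightarrow> 's list \<Rightarrow> real" where
  "CV a x0 f h \<equiv> contval Pr beta zeta a x0 f h"

abbreviation L where
  "L a lam gam x0 s0 \<equiv> lagr Pr beta zeta r g gbar a lam gam x0 s0"

abbreviation D where
  "D gam x0 s0 \<equiv> Dtil Pr beta Act zeta p r g gbar gam x0 s0"

lemma plans_Act: "a \<in> Plans x0 \<Longrightarrow> h \<noteq> [] \<Longrightarrow> a h \<in> Act"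
  unfolding plans_def by auto

lemma plans_p: "a \<in> Plans x0 \<Longrightarrow> h \<noteq> [] \<Longrightarrow> 0 \<le> p (xst zeta a x0 h) (a h) (last h)"
  unfolding plans_def by auto

lemma feasible_plan_exists: "x0 \<in> X \<Longrightarrow> \<exists>a\<in>Plans x0. feasible Pr beta Act zeta p g gbar x0 s0 a"
  using feasible_exists[of x0 s0] unfolding feasible_def by auto

lemma xst_in_X:
  assumes a: "a \<in> Plans x0" and x0: "x0 \<in> X" and h: "h \<noteq> []"
  shows "xst zeta a x0 h \<in> X"
proof -
  have "st_aux zeta a x0 h k \<in> X" if "k < length h" for k
    using that
  proof (induction k)
    case (Suc k)
    then have "take (Suc k) h \<noteq> []" by (cases h) auto
    then show ?case using Suc by (auto intro!: zeta_X plans_Act[OF a])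
  qed (use x0 in simp)
  then show ?thesis unfolding xst_def using h by simp
qed

lemma shift_plan_in_plans:
  assumes a: "a \<in> Plans x0"
  shows "shift_plan a s \<in> Plans (zeta x0 (a [s]) s)"
  unfolding plans_def
proof safe
  fix h :: "'s list" assume h: "h \<noteq> []"
  show "shift_plan a s h \<in> Act" using plans_Act[OF a] by (simp add: shift_plan_def)
  show "0 \<le> p (xst zeta (shift_plan a s) (zeta x0 (a [s]) s) h) (shift_plan a s h) (last h)"
    using plans_p[OF a, of "s # h"] h by (simp add: xst_Cons shift_plan_def)
qed

lemma paste_plan_in_plans:
  assumes x0: "x0 \<in> X" and a0: "a0 \<in> Act" "0 \<le> p x0 a0 s0"
    and b: "\<And>s'. b s' \<in> Plans (zeta x0 a0 s0)" and c: "c \<in> Plans x0"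
  shows "paste_plan s0 a0 b c \<in> Plans x0"
  unfolding plans_def
proof safe
  fix h :: "'s list" assume h: "h \<noteq> []"
  let ?a = "paste_plan s0 a0 b c"
  have "?a h \<in> Act \<and> 0 \<le> p (xst zeta ?a x0 h) (?a h) (last h)"
  proof (cases "hd h = s0")
    case False
    have "xst zeta ?a x0 h = xst zeta c x0 h"
      by (rule xst_cong[OF h]) (simp add: paste_plan_other False)
    then show ?thesis
      using paste_plan_other[OF h False, of a0 b c] plans_Act[OF c h] plans_p[OF c h] by simp
  next
    case True
    then obtain h' where h': "h = s0 # h'" using h by (cases h) auto
    show ?thesis
    proof (cases "h' = []")
      case True then show ?thesis using h' a0 by simp
    next
      case False
      have "xst zeta ?a x0 h = xst zeta (shift_plan ?a s0) (zeta x0 a0 s0) h'"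
        using h' False by (simp add: xst_Cons)
      also have "\<dots> = xst zeta (b (hd h')) (zeta x0 a0 s0) h'"
        by (rule xst_cong[OF False]) (simp add: shift_plan_def paste_plan_Cons)
      finally show ?thesis
        using h' False paste_plan_Cons[OF False, of s0 a0 b c] plans_Act[OF b False] plans_p[OF b False]
        by simp
    qed
  qed
  then show "?a h \<in> Act" "0 \<le> p (xst zeta ?a x0 h) (?a h) (last h)" by auto
qed

lemma contval_bounded:
  assumes f: "\<forall>x\<in>X. \<forall>a\<in>Act. \<forall>s. \<bar>f x a s\<bar> \<le> B"
    and a: "a \<in> Plans x0" and x0: "x0 \<in> X" and h: "h \<noteq> []"
  shows "summable (\<lambda>n. beta ^ n * cexp Pr h n (flow zeta a x0 f))"
    and "\<bar>CV a x0 f h\<bar> \<le> B / (1 - beta)"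
proof -
  have "\<bar>flow zeta a x0 f h'\<bar> \<le> B" if "h' \<noteq> []" for h'
    unfolding flow_def using f xst_in_X[OF a x0 that] plans_Act[OF a that] by auto
  then have "\<bar>cexp Pr h n (flow zeta a x0 f)\<bar> \<le> B" for n
    using h cexp_abs_le[of n "flow zeta a x0 f" h "\<lambda>_. B"] by (simp add: cexp_const)
  from discounted_sum_bounded[OF less_imp_le[OF beta_pos] beta_less_1 this]
  show "summable (\<lambda>n. beta ^ n * cexp Pr h n (flow zeta a x0 f))"
    and "\<bar>CV a x0 f h\<bar> \<le> B / (1 - beta)"
    unfolding contval_def by auto
qed

lemma contval_uniformly_bounded:
  assumes "\<exists>B. \<forall>x\<in>X. \<forall>a\<in>Act. \<forall>s. \<bar>f x a s\<bar> \<le> B"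
  shows "\<exists>C. \<forall>x0\<in>X. \<forall>a\<in>Plans x0. \<forall>h. h \<noteq> [] \<longrightarrow> \<bar>CV a x0 f h\<bar> \<le> C"
  using assms contval_bounded(2) by blast

lemma contval_recursion:
  assumes f: "\<exists>B. \<forall>x\<in>X. \<forall>a\<in>Act. \<forall>s. \<bar>f x a s\<bar> \<le> B"
    and a: "a \<in> Plans x0" and x0: "x0 \<in> X"
  shows "CV a x0 f [s] = f x0 (a [s]) s +
      beta * (\<Sum>s'\<in>UNIV. Pr s s' * CV (shift_plan a s) (zeta x0 (a [s]) s) f [s'])"
proof -
  have a': "shift_plan a s \<in> Plans (zeta x0 (a [s]) s)" by (rule shift_plan_in_plans[OF a])
  have x': "zeta x0 (a [s]) s \<in> X" by (rule zeta_X[OF x0 plans_Act[OF a]]) simp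
  have "cexp Pr [s] (Suc t) (flow zeta a x0 f) =
     (\<Sum>s'\<in>UNIV. Pr s s' * cexp Pr [s'] t (flow zeta (shift_plan a s) (zeta x0 (a [s]) s) f))" for t
    unfolding cexp_singleton_Suc
    by (intro sum.cong refl arg_cong2[where f="(*)"] cexp_cong) (simp add: flow_Cons)
  moreover obtain B where "\<forall>x\<in>X. \<forall>a\<in>Act. \<forall>s. \<bar>f x a s\<bar> \<le> B" using f by blast
  ultimately show ?thesis
    unfolding contval_def
    by (subst discounted_sum_Suc(2)[OF _ contval_bounded(1)[OF _ a' x']]) auto
qed

definition post_hists :: "nat \<Rightarrow> ('s \<times> 'act) list set" where
  "post_hists t = {ht. length ht = Suc t \<and> set ht \<subseteq> UNIV \<times> Act}"

definition mult_mass :: "(('s \<times> 'act) list \<Rightarrow> 'i \<Rightarrow> real) \<Rightarrow> 's \<Rightarrow> nat \<Rightarrow> real" where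
  "mult_mass lam s0 t = (\<Sum>ht\<in>post_hists t. \<Sum>i\<in>UNIV. lam ht i * hprob Pr s0 (map fst ht))"

lemma mem_mults_iff:
  "lam \<in> Mults s0 \<longleftrightarrow> (\<forall>ht i. 0 \<le> lam ht i) \<and> summable (\<lambda>t. beta ^ t * mult_mass lam s0 t)"
  unfolding mults_def mult_mass_def post_hists_def by simp

lemma finite_post_hists: "finite (post_hists t)"
proof -
  have "finite {ht. set ht \<subseteq> (UNIV::'s set) \<times> Act \<and> length ht = Suc t}"
    by (rule finite_lists_length_eq) (simp add: Act_finite)
  then show ?thesis unfolding post_hists_def by (rule finite_subset[rotated]) auto
qed

lemma post_hists_Suc: "post_hists (Suc t) = (\<lambda>(sa, ht). sa # ht) ` ((UNIV \<times> Act) \<times> post_hists t)"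
proof -
  have "ht \<in> (\<lambda>(sa, ht). sa # ht) ` ((UNIV \<times> Act) \<times> post_hists t)" if "ht \<in> post_hists (Suc t)" for ht
    using that by (cases ht) (auto simp: post_hists_def)
  then show ?thesis by (auto simp: post_hists_def)
qed

lemma mult_mass_Suc:
  "mult_mass lam s0 (Suc t) = (\<Sum>sa\<in>UNIV \<times> Act. \<Sum>ht\<in>post_hists t.
      \<Sum>i\<in>UNIV. lam (sa # ht) i * hprob Pr s0 (map fst (sa # ht)))"
proof -
  let ?G = "\<lambda>ht. \<Sum>i\<in>UNIV. lam ht i * hprob Pr s0 (map fst ht)"
  have inj: "inj_on (\<lambda>(sa, ht). sa # ht) ((UNIV \<times> Act) \<times> post_hists t)"
    by (auto simp: inj_on_def)
  have "mult_mass lam s0 (Suc t) = (\<Sum>(sa, ht)\<in>(UNIV \<times> Act) \<times> post_hists t. ?G (sa # ht))"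
    unfolding mult_mass_def by (rule sum.reindex_cong[OF inj post_hists_Suc]) auto
  also have "\<dots> = (\<Sum>sa\<in>UNIV \<times> Act. \<Sum>ht\<in>post_hists t. ?G (sa # ht))"
    by (rule sum.cartesian_product[symmetric])
  finally show ?thesis .
qed

lemma zero_in_mults: "(\<lambda>_ _. 0) \<in> Mults s0"
  unfolding mem_mults_iff mult_mass_def by simp

lemma mult_mass_nonneg: "(\<And>ht i. 0 \<le> lam ht i) \<Longrightarrow> 0 \<le> mult_mass lam s0 t"
  unfolding mult_mass_def by (intro sum_nonneg mult_nonneg_nonneg hprob_nonneg) auto

lemma cexp_mult_le_mult_mass:
  assumes a: "a \<in> Plans x0" and lam: "\<And>ht i. 0 \<le> lam ht i"
  shows "cexp Pr [s] t (\<lambda>h. \<Sum>i\<in>UNIV. lam (phist a h) i) \<le> mult_mass lam s t"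
proof -
  let ?E = "{e::'s list. length e = t}"
  let ?ph = "\<lambda>e. phist a (s # e)"
  let ?G = "\<lambda>ht. \<Sum>i\<in>UNIV. lam ht i * hprob Pr s (map fst ht)"
  have inj: "inj_on ?ph ?E"
    by (rule inj_onI) (metis list.inject map_fst_phist)
  have sub: "?ph ` ?E \<subseteq> post_hists t"
    unfolding post_hists_def phist_def by (auto intro!: plans_Act[OF a])
  have "cexp Pr [s] t (\<lambda>h. \<Sum>i\<in>UNIV. lam (phist a h) i) = (\<Sum>ht\<in>?ph ` ?E. ?G ht)"
    unfolding cexp_def by (simp add: sum.reindex[OF inj] sum_distrib_left mult.commute)
  also have "\<dots> \<le> (\<Sum>ht\<in>post_hists t. ?G ht)"
    by (rule sum_mono2[OF finite_post_hists sub]) (auto intro!: sum_nonneg mult_nonneg_nonneg hprob_nonneg lam)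
  finally show ?thesis unfolding mult_mass_def .
qed

lemma shift_mult_in_mults:
  assumes lam: "lam \<in> Mults s" and a0: "a0 \<in> Act"
  shows "shift_mult lam (s, a0) \<in> Mults s'"
proof -
  have lam_nonneg: "\<And>ht i. 0 \<le> lam ht i" and summable: "summable (\<lambda>t. beta ^ t * mult_mass lam s t)"
    using lam by (auto simp: mem_mults_iff)
  let ?G = "\<lambda>sa ht. \<Sum>i\<in>UNIV. lam (sa # ht) i * hprob Pr s (map fst (sa # ht))"
  have "Pr s s' * mult_mass (shift_mult lam (s, a0)) s' t \<le> mult_mass lam s (Suc t)" for t
  proof -
    have "Pr s s' * mult_mass (shift_mult lam (s, a0)) s' t =
        (\<Sum>ht\<in>post_hists t. \<Sum>i\<in>UNIV. lam ((s, a0) # ht) i * (Pr s s' * hprob Pr s' (map fst ht)))"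
      unfolding mult_mass_def shift_mult_def by (simp add: sum_distrib_left mult.left_commute)
    also have "\<dots> \<le> (\<Sum>ht\<in>post_hists t. ?G (s, a0) ht)"
      by (intro sum_mono mult_left_mono) (auto simp: lam_nonneg hprob_Cons_ge)
    also have "\<dots> \<le> (\<Sum>sa\<in>UNIV \<times> Act. \<Sum>ht\<in>post_hists t. ?G sa ht)"
      using a0 Act_finite
      by (intro member_le_sum[where f="\<lambda>sa. \<Sum>ht\<in>post_hists t. ?G sa ht"])
        (auto intro!: sum_nonneg mult_nonneg_nonneg lam_nonneg hprob_nonneg)
    finally show ?thesis by (simp only: mult_mass_Suc)
  qed
  then have le: "mult_mass (shift_mult lam (s, a0)) s' t \<le> 1 / Pr s s' * mult_mass lam s (Suc t)" for t
    using Pr_pos[of s s'] by (simp add: field_simps)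
  have "summable (\<lambda>t. beta ^ t * mult_mass (shift_mult lam (s, a0)) s' t)"
    by (rule summable_discounted_if_le_Suc[OF beta_pos _ le summable])
      (auto intro!: mult_mass_nonneg simp: shift_mult_def lam_nonneg)
  then show ?thesis by (simp add: mem_mults_iff shift_mult_def lam_nonneg)
qed

lemma mult_mass_paste_mult_Suc_le:
  assumes Lam_nonneg: "\<And>a s' ht i. 0 \<le> Lam a s' ht i"
  shows "mult_mass (paste_mult l0 Lam) s (Suc t) \<le>
    card ((UNIV::'s set) \<times> Act) * (\<Sum>a1\<in>Act. \<Sum>s2\<in>UNIV. mult_mass (Lam a1 s2) s2 t)"
proof -
  let ?W = "\<Sum>a1\<in>Act. \<Sum>s2\<in>UNIV. mult_mass (Lam a1 s2) s2 t"
  let ?M = "\<lambda>a1 s2 ht. \<Sum>i\<in>UNIV. Lam a1 s2 ht i * hprob Pr s2 (map fst ht)"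
  have M_nonneg: "0 \<le> ?M a1 s2 ht" for a1 s2 ht
    by (intro sum_nonneg mult_nonneg_nonneg Lam_nonneg hprob_nonneg)
  have "(\<Sum>ht\<in>post_hists t. \<Sum>i\<in>UNIV.
      paste_mult l0 Lam (sa # ht) i * hprob Pr s (map fst (sa # ht))) \<le> ?W"
    if sa: "sa \<in> UNIV \<times> Act" for sa
  proof -
    have "(\<Sum>ht\<in>post_hists t. \<Sum>i\<in>UNIV.
        paste_mult l0 Lam (sa # ht) i * hprob Pr s (map fst (sa # ht))) \<le>
        (\<Sum>ht\<in>post_hists t. ?M (snd sa) (fst (hd ht)) ht)"
    proof (intro sum_mono)
      fix ht i assume "ht \<in> post_hists t"
      then have "ht \<noteq> []" by (auto simp: post_hists_def)
      then show "paste_mult l0 Lam (sa # ht) i * hprob Pr s (map fst (sa # ht)) \<le>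
          Lam (snd sa) (fst (hd ht)) ht i * hprob Pr (fst (hd ht)) (map fst ht)"
        using hprob_Cons_le[of "map fst ht" s "fst sa"]
        by (simp add: paste_mult_Cons hd_map mult_left_mono Lam_nonneg)
    qed
    also have "\<dots> \<le> (\<Sum>ht\<in>post_hists t. \<Sum>s2\<in>UNIV. ?M (snd sa) s2 ht)"
      by (intro sum_mono member_le_sum M_nonneg) simp_all
    also have "\<dots> = (\<Sum>s2\<in>UNIV. mult_mass (Lam (snd sa) s2) s2 t)"
      unfolding mult_mass_def by (rule sum.swap)
    also have "\<dots> \<le> ?W"
      using sa Act_finite
      by (intro member_le_sum[where f="\<lambda>a1. \<Sum>s2\<in>UNIV. mult_mass (Lam a1 s2) s2 t"])
        (auto intro!: sum_nonneg mult_mass_nonneg Lam_nonneg)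
    finally show ?thesis .
  qed
  then have "mult_mass (paste_mult l0 Lam) s (Suc t) \<le> (\<Sum>sa\<in>(UNIV::'s set) \<times> Act. ?W)"
    unfolding mult_mass_Suc by (rule sum_mono)
  then show ?thesis by simp
qed

lemma paste_mult_in_mults:
  assumes l0: "\<And>a i. 0 \<le> l0 a i" and Lam: "\<And>a s'. Lam a s' \<in> Mults s'"
  shows "paste_mult l0 Lam \<in> Mults s"
proof -
  have Lam_nonneg: "0 \<le> Lam a s' ht i" for a s' ht i
    using Lam[of a s'] by (auto simp: mem_mults_iff)
  have W: "summable (\<lambda>t. beta ^ t * (\<Sum>a1\<in>Act. \<Sum>s2\<in>UNIV. mult_mass (Lam a1 s2) s2 t))"
    using Lam by (simp add: sum_distrib_left mem_mults_iff summable_sum)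
  have "summable (\<lambda>t. beta ^ t * mult_mass (paste_mult l0 Lam) s t)"
    by (rule summable_discounted_if_Suc_le[where u="mult_mass (paste_mult l0 Lam) s",
          OF less_imp_le[OF beta_pos] _ mult_mass_paste_mult_Suc_le[OF Lam_nonneg] W])
      (auto intro!: mult_mass_nonneg paste_mult_nonneg l0 Lam_nonneg)
  then show ?thesis
    by (auto simp: mem_mults_iff intro!: paste_mult_nonneg l0 Lam_nonneg)
qed

definition slack_sum ::
    "('s list \<Rightarrow> 'act) \<Rightarrow> (('s \<times> 'act) list \<Rightarrow> 'i \<Rightarrow> real) \<Rightarrow> 'x \<Rightarrow> 's list \<Rightarrow> real" where
  "slack_sum a lam x0 h = (\<Sum>i\<in>UNIV. lam (phist a h) i * (CV a x0 (g i) h - gbar i))"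

definition penalty ::
    "('s list \<Rightarrow> 'act) \<Rightarrow> (('s \<times> 'act) list \<Rightarrow> 'i \<Rightarrow> real) \<Rightarrow> 'x \<Rightarrow> 's \<Rightarrow> real" where
  "penalty a lam x0 s0 = (\<Sum>t. beta ^ t * cexp Pr [s0] t (slack_sum a lam x0))"

definition stage_lagr :: "('i \<Rightarrow> real) \<Rightarrow> ('i \<Rightarrow> real) \<Rightarrow> 'x \<Rightarrow> 'act \<Rightarrow> 's \<Rightarrow> real" where
  "stage_lagr gam l x a s = r x a s + (\<Sum>i\<in>UNIV. gam i * g i x a s + l i * (g i x a s - gbar i))"

lemma slack_uniformly_bounded:
  "\<exists>K\<ge>0. \<forall>i. \<forall>x0\<in>X. \<forall>a\<in>Plans x0. \<forall>h. h \<noteq> [] \<longrightarrow> \<bar>CV a x0 (g i) h - gbar i\<bar> \<le> K"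
proof -
  have "\<forall>i. \<exists>C. \<forall>x0\<in>X. \<forall>a\<in>Plans x0. \<forall>h. h \<noteq> [] \<longrightarrow> \<bar>CV a x0 (g i) h\<bar> \<le> C"
    using contval_uniformly_bounded[OF g_bounded] by blast
  from choice[OF this] obtain C
    where C: "\<forall>i. \<forall>x0\<in>X. \<forall>a\<in>Plans x0. \<forall>h. h \<noteq> [] \<longrightarrow> \<bar>CV a x0 (g i) h\<bar> \<le> C i"
    by blast
  define K where "K = (\<Sum>j\<in>UNIV. \<bar>C j\<bar> + \<bar>gbar j\<bar>)"
  have "\<bar>CV a x0 (g i) h - gbar i\<bar> \<le> K" if "x0 \<in> X" "a \<in> Plans x0" "h \<noteq> []" for i x0 a h
  proof -
    have "\<bar>CV a x0 (g i) h\<bar> \<le> C i"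
      using C that by blast
    then have "\<bar>CV a x0 (g i) h - gbar i\<bar> \<le> \<bar>C i\<bar> + \<bar>gbar i\<bar>"
      using abs_triangle_ineq4[of "CV a x0 (g i) h" "gbar i"] abs_ge_self[of "C i"] by linarith
    also have "\<dots> \<le> K"
      unfolding K_def by (rule member_le_sum) auto
    finally show ?thesis .
  qed
  moreover have "0 \<le> K"
    unfolding K_def by (simp add: sum_nonneg)
  ultimately show ?thesis by blast
qed

lemma penalty_summable:
  assumes a: "a \<in> Plans x0" and x0: "x0 \<in> X" and lam: "lam \<in> Mults s"
  shows "summable (\<lambda>t. beta ^ t * cexp Pr [s] t (slack_sum a lam x0))"
proof -
  have lam_nonneg: "\<And>ht i. 0 \<le> lam ht i" and summable: "summable (\<lambda>t. beta ^ t * mult_mass lam s t)"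
    using lam by (auto simp: mem_mults_iff)
  obtain K where "0 \<le> K"
    and K: "\<forall>i. \<forall>x0\<in>X. \<forall>a\<in>Plans x0. \<forall>h. h \<noteq> [] \<longrightarrow> \<bar>CV a x0 (g i) h - gbar i\<bar> \<le> K"
    using slack_uniformly_bounded by blast
  have "\<bar>slack_sum a lam x0 h\<bar> \<le> K * (\<Sum>i\<in>UNIV. lam (phist a h) i)" if "h \<noteq> []" for h
  proof -
    have "\<bar>slack_sum a lam x0 h\<bar> \<le> (\<Sum>i\<in>UNIV. lam (phist a h) i * K)"
      unfolding slack_sum_def
      by (rule order_trans[OF sum_abs sum_mono]) (simp add: abs_mult lam_nonneg mult_left_mono K a x0 that)
    then show ?thesis by (simp add: sum_distrib_left mult.commute)
  qed
  then have "\<bar>cexp Pr [s] t (slack_sum a lam x0)\<bar> \<le> K * mult_mass lam s t" for t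
  proof -
    assume bound: "\<And>h. h \<noteq> [] \<Longrightarrow> \<bar>slack_sum a lam x0 h\<bar> \<le> K * (\<Sum>i\<in>UNIV. lam (phist a h) i)"
    have "\<bar>cexp Pr [s] t (slack_sum a lam x0)\<bar> \<le> cexp Pr [s] t (\<lambda>h. K * (\<Sum>i\<in>UNIV. lam (phist a h) i))"
      by (rule cexp_abs_le) (simp add: bound)
    also have "\<dots> \<le> K * mult_mass lam s t"
      unfolding cexp_cmult by (intro mult_left_mono cexp_mult_le_mult_mass[OF a] lam_nonneg \<open>0 \<le> K\<close>)
    finally show ?thesis .
  qed
  then have "norm (beta ^ t * cexp Pr [s] t (slack_sum a lam x0)) \<le> K * (beta ^ t * mult_mass lam s t)" for t
    using beta_pos by (simp add: abs_mult mult.left_commute mult_left_mono)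
  then show ?thesis
    by (intro summable_comparison_test[OF _ summable_mult[OF summable]]) auto
qed

lemma penalty_nonneg:
  assumes a: "a \<in> Plans x0" and x0: "x0 \<in> X" and lam: "lam \<in> Mults s"
    and feasible: "feasible Pr beta Act zeta p g gbar x0 s a"
  shows "0 \<le> penalty a lam x0 s"
  unfolding penalty_def
proof (rule suminf_nonneg[OF penalty_summable[OF a x0 lam]])
  fix t
  have "gbar i \<le> CV a x0 (g i) (s # e)" for i e
    using feasible unfolding feasible_def by simp
  then have "0 \<le> slack_sum a lam x0 (s # e)" for e
    using lam unfolding slack_sum_def mem_mults_iff by (simp add: sum_nonneg)
  then have "0 \<le> cexp Pr [s] t (slack_sum a lam x0)"
    by (intro cexp_nonneg) simp
  then show "0 \<le> beta ^ t * cexp Pr [s] t (slack_sum a lam x0)"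
    using beta_pos by simp
qed

lemma penalty_zero_mult: "penalty a (\<lambda>_ _. 0) x0 s = 0"
  unfolding penalty_def slack_sum_def by simp

lemma lagr_split:
  assumes a: "a \<in> Plans x0" and x0: "x0 \<in> X" and lam: "lam \<in> Mults s"
  shows "L a lam gam x0 s = CV a x0 r [s] + (\<Sum>i\<in>UNIV. gam i * CV a x0 (g i) [s]) + penalty a lam x0 s"
proof -
  have summand: "beta ^ t * cexp Pr [s] t (\<lambda>h. flow zeta a x0 r h
        + (\<Sum>i\<in>UNIV. gam i * flow zeta a x0 (g i) h)
        + (\<Sum>i\<in>UNIV. lam (phist a h) i * (CV a x0 (g i) h - gbar i))) =
      beta ^ t * cexp Pr [s] t (flow zeta a x0 r)
        + (\<Sum>i\<in>UNIV. gam i * (beta ^ t * cexp Pr [s] t (flow zeta a x0 (g i))))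
        + beta ^ t * cexp Pr [s] t (slack_sum a lam x0)" for t
  proof -
    have "(\<lambda>h. \<Sum>i\<in>UNIV. lam (phist a h) i * (CV a x0 (g i) h - gbar i)) = slack_sum a lam x0"
      by (simp add: slack_sum_def fun_eq_iff)
    moreover have "cexp Pr [s] t (\<lambda>h. \<Sum>i\<in>UNIV. gam i * flow zeta a x0 (g i) h) =
        (\<Sum>i\<in>UNIV. gam i * cexp Pr [s] t (flow zeta a x0 (g i)))"
      by (simp add: cexp_sum cexp_cmult)
    ultimately show ?thesis
      by (simp only: cexp_add) (simp add: algebra_simps sum_distrib_left)
  qed
  obtain Br where Br: "\<forall>x\<in>X. \<forall>a\<in>Act. \<forall>s. \<bar>r x a s\<bar> \<le> Br" using r_bounded by blast
  have "\<forall>i. \<exists>B. \<forall>x\<in>X. \<forall>a\<in>Act. \<forall>s. \<bar>g i x a s\<bar> \<le> B"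
    using g_bounded by blast
  from choice[OF this] obtain Bg where Bg: "\<forall>i. \<forall>x\<in>X. \<forall>a\<in>Act. \<forall>s. \<bar>g i x a s\<bar> \<le> Bg i"
    by blast
  have r_sums: "(\<lambda>t. beta ^ t * cexp Pr [s] t (flow zeta a x0 r)) sums CV a x0 r [s]"
    unfolding contval_def by (rule summable_sums[OF contval_bounded(1)[OF Br a x0]]) simp
  have g_sums: "(\<lambda>t. \<Sum>i\<in>UNIV. gam i * (beta ^ t * cexp Pr [s] t (flow zeta a x0 (g i)))) sums
      (\<Sum>i\<in>UNIV. gam i * CV a x0 (g i) [s])"
    unfolding contval_def by (intro sums_sum sums_mult summable_sums contval_bounded(1)[OF spec[OF Bg] a x0]) simp
  have penalty_sums: "(\<lambda>t. beta ^ t * cexp Pr [s] t (slack_sum a lam x0)) sums penalty a lam x0 s"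
    unfolding penalty_def by (rule summable_sums[OF penalty_summable[OF a x0 lam]])
  show ?thesis
    unfolding lagr_def summand using sums_add[OF sums_add[OF r_sums g_sums] penalty_sums]
    by (simp add: sums_iff)
qed

lemma penalty_recursion:
  assumes a: "a \<in> Plans x0" and x0: "x0 \<in> X" and lam: "lam \<in> Mults s"
  shows "penalty a lam x0 s = (\<Sum>i\<in>UNIV. lam [(s, a [s])] i * (CV a x0 (g i) [s] - gbar i)) +
     beta * (\<Sum>s'\<in>UNIV. Pr s s' * penalty (shift_plan a s) (shift_mult lam (s, a [s])) (zeta x0 (a [s]) s) s')"
proof -
  have a0: "a [s] \<in> Act" by (rule plans_Act[OF a]) simp
  have a': "shift_plan a s \<in> Plans (zeta x0 (a [s]) s)" by (rule shift_plan_in_plans[OF a])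
  have x': "zeta x0 (a [s]) s \<in> X" by (rule zeta_X[OF x0 a0])
  have "slack_sum a lam x0 (s # h) =
      slack_sum (shift_plan a s) (shift_mult lam (s, a [s])) (zeta x0 (a [s]) s) h" if "h \<noteq> []" for h
    unfolding slack_sum_def using that by (simp add: phist_Cons contval_Cons shift_mult_def)
  then have "cexp Pr [s] (Suc t) (slack_sum a lam x0) = (\<Sum>s'\<in>UNIV. Pr s s' *
      cexp Pr [s'] t (slack_sum (shift_plan a s) (shift_mult lam (s, a [s])) (zeta x0 (a [s]) s)))" for t
    unfolding cexp_singleton_Suc by (intro sum.cong refl arg_cong2[where f="(*)"] cexp_cong) simp
  moreover have "summable (\<lambda>t. beta ^ t *
      cexp Pr [s'] t (slack_sum (shift_plan a s) (shift_mult lam (s, a [s])) (zeta x0 (a [s]) s)))" for s'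
    by (rule penalty_summable[OF a' x' shift_mult_in_mults[OF lam a0]])
  ultimately have "penalty a lam x0 s = slack_sum a lam x0 [s] + beta * (\<Sum>s'\<in>UNIV. Pr s s' *
      penalty (shift_plan a s) (shift_mult lam (s, a [s])) (zeta x0 (a [s]) s) s')"
    unfolding penalty_def by (subst discounted_sum_Suc(2)) (assumption+, simp)
  then show ?thesis
    by (simp add: slack_sum_def[of a lam x0 "[s]"])
qed

text \<open>The period-0 multiplier weights the whole future constraint sum, so it is absorbed into
  the accumulated weight \<open>gam\<close> of the continuation problem.\<close>

lemma lagr_recursion:
  assumes a: "a \<in> Plans x0" and x0: "x0 \<in> X" and lam: "lam \<in> Mults s"
  shows "L a lam gam x0 s = stage_lagr gam (lam [(s, a [s])]) x0 (a [s]) s +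
    beta * (\<Sum>s'\<in>UNIV. Pr s s' * L (shift_plan a s) (shift_mult lam (s, a [s]))
      (\<lambda>i. gam i + lam [(s, a [s])] i) (zeta x0 (a [s]) s) s')"
proof -
  define a0 where "a0 = a [s]"
  define l0 where "l0 = lam [(s, a0)]"
  define x' where "x' = zeta x0 a0 s"
  define a' where "a' = shift_plan a s"
  define lam' where "lam' = shift_mult lam (s, a0)"
  have a0_Act: "a0 \<in> Act" unfolding a0_def by (rule plans_Act[OF a]) simp
  have a': "a' \<in> Plans x'" unfolding a'_def x'_def a0_def by (rule shift_plan_in_plans[OF a])
  have x': "x' \<in> X" unfolding x'_def by (rule zeta_X[OF x0 a0_Act])
  have lam': "lam' \<in> Mults s'" for s' unfolding lam'_def by (rule shift_mult_in_mults[OF lam a0_Act])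
  define R where "R s' = CV a' x' r [s']" for s'
  define G where "G i s' = CV a' x' (g i) [s']" for i s'
  define W where "W s' = penalty a' lam' x' s'" for s'
  have "(\<Sum>s'\<in>UNIV. Pr s s' * L a' lam' (\<lambda>i. gam i + l0 i) x' s') =
      (\<Sum>s'\<in>UNIV. Pr s s' * (R s' + (\<Sum>i\<in>UNIV. (gam i + l0 i) * G i s') + W s'))"
    unfolding R_def G_def W_def by (simp add: lagr_split[OF a' x' lam'])
  also have "\<dots> = (\<Sum>s'\<in>UNIV. Pr s s' * R s') +
      (\<Sum>i\<in>UNIV. (gam i + l0 i) * (\<Sum>s'\<in>UNIV. Pr s s' * G i s')) + (\<Sum>s'\<in>UNIV. Pr s s' * W s')"
    unfolding distrib_left sum.distrib sum_distrib_left
    by (subst sum.swap[of _ UNIV UNIV]) (simp add: mult_ac)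
  finally have expectation: "(\<Sum>s'\<in>UNIV. Pr s s' * L a' lam' (\<lambda>i. gam i + l0 i) x' s') = \<dots>" .
  have "CV a x0 r [s] = r x0 a0 s + beta * (\<Sum>s'\<in>UNIV. Pr s s' * R s')"
    unfolding R_def a'_def x'_def a0_def by (rule contval_recursion[OF r_bounded a x0])
  moreover have "CV a x0 (g i) [s] = g i x0 a0 s + beta * (\<Sum>s'\<in>UNIV. Pr s s' * G i s')" for i
    unfolding G_def a'_def x'_def a0_def by (rule contval_recursion[OF g_bounded a x0])
  moreover have "penalty a lam x0 s = (\<Sum>i\<in>UNIV. l0 i * (CV a x0 (g i) [s] - gbar i)) +
      beta * (\<Sum>s'\<in>UNIV. Pr s s' * W s')"
    unfolding W_def a'_def x'_def a0_def lam'_def l0_def by (rule penalty_recursion[OF a x0 lam])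
  ultimately show ?thesis
    unfolding lagr_split[OF a x0 lam] a0_def[symmetric] l0_def[symmetric] x'_def[symmetric]
      a'_def[symmetric] lam'_def[symmetric] expectation stage_lagr_def
    by (simp add: algebra_simps sum.distrib sum_subtractf sum_distrib_left)
qed

lemma payoff_uniformly_bounded:
  "\<exists>C. \<forall>x0\<in>X. \<forall>a\<in>Plans x0. \<bar>CV a x0 r [s] + (\<Sum>i\<in>UNIV. gam i * CV a x0 (g i) [s])\<bar> \<le> C"
proof -
  obtain Cr where Cr: "\<forall>x0\<in>X. \<forall>a\<in>Plans x0. \<forall>h. h \<noteq> [] \<longrightarrow> \<bar>CV a x0 r h\<bar> \<le> Cr"
    using contval_uniformly_bounded[OF r_bounded] by blast
  have "\<forall>i. \<exists>C. \<forall>x0\<in>X. \<forall>a\<in>Plans x0. \<forall>h. h \<noteq> [] \<longrightarrow> \<bar>CV a x0 (g i) h\<bar> \<le> C"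
    using contval_uniformly_bounded[OF g_bounded] by blast
  from choice[OF this] obtain Cg
    where Cg: "\<forall>i. \<forall>x0\<in>X. \<forall>a\<in>Plans x0. \<forall>h. h \<noteq> [] \<longrightarrow> \<bar>CV a x0 (g i) h\<bar> \<le> Cg i"
    by blast
  have "\<bar>CV a x0 r [s] + (\<Sum>i\<in>UNIV. gam i * CV a x0 (g i) [s])\<bar> \<le> Cr + (\<Sum>i\<in>UNIV. \<bar>gam i\<bar> * Cg i)"
    if "x0 \<in> X" "a \<in> Plans x0" for x0 a
  proof -
    have "\<bar>\<Sum>i\<in>UNIV. gam i * CV a x0 (g i) [s]\<bar> \<le> (\<Sum>i\<in>UNIV. \<bar>gam i\<bar> * Cg i)"
      using Cg that by (intro order_trans[OF sum_abs sum_mono]) (simp add: abs_mult mult_left_mono)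
    moreover have "\<bar>CV a x0 r [s]\<bar> \<le> Cr" using Cr that by blast
    ultimately show ?thesis by linarith
  qed
  then show ?thesis by blast
qed

lemma Dtil_finite:
  assumes x0: "x0 \<in> X"
  shows "\<bar>D gam x0 s\<bar> \<noteq> \<infinity>"
proof -
  obtain C where C: "\<And>a. a \<in> Plans x0 \<Longrightarrow>
      \<bar>CV a x0 r [s] + (\<Sum>i\<in>UNIV. gam i * CV a x0 (g i) [s])\<bar> \<le> C"
    using payoff_uniformly_bounded x0 by blast
  obtain a_feas where a_feas: "a_feas \<in> Plans x0" "feasible Pr beta Act zeta p g gbar x0 s a_feas"
    using feasible_plan_exists[OF x0] by blast
  have "ereal (- C) \<le> D gam x0 s"
    unfolding Dtil_def
  proof (rule INF_greatest)
    fix lam assume lam: "lam \<in> Mults s"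
    have "- C \<le> L a_feas lam gam x0 s"
      using lagr_split[OF a_feas(1) x0 lam, of gam] C[OF a_feas(1)]
        penalty_nonneg[OF a_feas(1) x0 lam a_feas(2)]
      by (simp add: abs_le_iff)
    then show "ereal (- C) \<le> (SUP a\<in>Plans x0. ereal (L a lam gam x0 s))"
      by (intro SUP_upper2[OF a_feas(1)]) simp
  qed
  moreover have "D gam x0 s \<le> (SUP a\<in>Plans x0. ereal (L a (\<lambda>_ _. 0) gam x0 s))"
    unfolding Dtil_def by (rule INF_lower[OF zero_in_mults])
  moreover have "\<dots> \<le> ereal C"
  proof (rule SUP_least)
    fix a assume a: "a \<in> Plans x0"
    show "ereal (L a (\<lambda>_ _. 0) gam x0 s) \<le> ereal C"
      using lagr_split[OF a x0 zero_in_mults, of gam] C[OF a] by (simp add: penalty_zero_mult abs_le_iff)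
  qed
  ultimately show ?thesis by auto
qed

text \<open>\<open>real_of_ereal\<close> maps \<open>\<plusminus>\<infinity>\<close> to \<open>0\<close>; \<open>Dr\<close> is meaningful only for \<open>x0 \<in> X\<close>, where \<open>D\<close> is finite.\<close>

abbreviation Dr :: "('i \<Rightarrow> real) \<Rightarrow> 'x \<Rightarrow> 's \<Rightarrow> real" where
  "Dr gam x0 s0 \<equiv> real_of_ereal (D gam x0 s0)"

lemma ereal_Dr: "x0 \<in> X \<Longrightarrow> ereal (Dr gam x0 s0) = D gam x0 s0"
  using Dtil_finite[of x0 gam s0] by (simp add: ereal_real)

lemma Dtil_approx_plan:
  assumes x0: "x0 \<in> X" and lam: "lam \<in> Mults s0" and e: "0 < e"
  shows "\<exists>b\<in>Plans x0. Dr gam x0 s0 \<le> L b lam gam x0 s0 + e"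
proof -
  have "ereal (Dr gam x0 s0 - e) < ereal (Dr gam x0 s0)"
    using e by simp
  also have "\<dots> = D gam x0 s0"
    by (rule ereal_Dr[OF x0])
  also have "D gam x0 s0 \<le> (SUP b\<in>Plans x0. ereal (L b lam gam x0 s0))"
    unfolding Dtil_def by (rule INF_lower[OF lam])
  finally obtain b where "b \<in> Plans x0" "Dr gam x0 s0 - e < L b lam gam x0 s0"
    by (auto simp: less_SUP_iff)
  then show ?thesis by force
qed

lemma Dtil_approx_mult:
  assumes x0: "x0 \<in> X" and e: "0 < e"
  shows "\<exists>lam\<in>Mults s0. \<forall>b\<in>Plans x0. L b lam gam x0 s0 \<le> Dr gam x0 s0 + e"
proof -
  have "D gam x0 s0 = ereal (Dr gam x0 s0)"
    by (rule ereal_Dr[OF x0, symmetric])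
  also have "\<dots> < ereal (Dr gam x0 s0 + e)"
    using e by simp
  finally have "D gam x0 s0 < ereal (Dr gam x0 s0 + e)" .
  then obtain lam where lam: "lam \<in> Mults s0"
    and lt: "(SUP b\<in>Plans x0. ereal (L b lam gam x0 s0)) < ereal (Dr gam x0 s0 + e)"
    unfolding Dtil_def INF_less_iff by blast
  then have "L b lam gam x0 s0 \<le> Dr gam x0 s0 + e" if "b \<in> Plans x0" for b
    using le_less_trans[OF SUP_upper[OF that, of "\<lambda>b. ereal (L b lam gam x0 s0)"] lt] by simp
  with lam show ?thesis by blast
qed

lemma expectation_Dtil:
  assumes "x' \<in> X"
  shows "(\<Sum>s'\<in>UNIV. ereal (Pr s s') * D gam x' s') = ereal (\<Sum>s'\<in>UNIV. Pr s s' * Dr gam x' s')"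
proof -
  have "ereal (Pr s s') * D gam x' s' = ereal (Pr s s' * Dr gam x' s')" for s'
    by (simp only: times_ereal.simps(1)[symmetric] ereal_Dr[OF assms])
  then show ?thesis by (simp only: sum_ereal)
qed

subsection \<open>The Bellman equation\<close>

abbreviation bellman_obj ::
    "('i \<Rightarrow> real) \<Rightarrow> 'x \<Rightarrow> 's \<Rightarrow> 'act \<Rightarrow> ('i \<Rightarrow> real) \<Rightarrow> ereal" where
  "bellman_obj gam x s a l \<equiv> ereal (stage_lagr gam l x a s) +
     ereal beta * (\<Sum>s'\<in>UNIV. ereal (Pr s s') * D (\<lambda>i. gam i + l i) (zeta x a s) s')"

lemma bellman_obj_real:
  "x \<in> X \<Longrightarrow> a \<in> Act \<Longrightarrow> bellman_obj gam x s a l =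
    ereal (stage_lagr gam l x a s + beta * (\<Sum>s'\<in>UNIV. Pr s s' * Dr (\<lambda>i. gam i + l i) (zeta x a s) s'))"
  by (simp add: expectation_Dtil zeta_X)

lemma lagr_paste_plan_ge:
  assumes x: "x \<in> X" and a0: "a0 \<in> Act" "0 \<le> p x a0 s" and lam: "lam \<in> Mults s"
    and b: "\<And>s'. b s' \<in> Plans (zeta x a0 s)" and c: "c \<in> Plans x"
    and b_approx: "\<And>s'. Dr (\<lambda>i. gam i + lam [(s, a0)] i) (zeta x a0 s) s' \<le>
      L (b s') (shift_mult lam (s, a0)) (\<lambda>i. gam i + lam [(s, a0)] i) (zeta x a0 s) s' + e"
  shows "stage_lagr gam (lam [(s, a0)]) x a0 s +
      beta * (\<Sum>s'\<in>UNIV. Pr s s' * Dr (\<lambda>i. gam i + lam [(s, a0)] i) (zeta x a0 s) s') - beta * e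
    \<le> L (paste_plan s a0 b c) lam gam x s"
proof -
  let ?a = "paste_plan s a0 b c"
  let ?gam' = "\<lambda>i. gam i + lam [(s, a0)] i"
  have a: "?a \<in> Plans x" by (rule paste_plan_in_plans[OF x a0 b c])
  have "L (shift_plan ?a s) (shift_mult lam (s, a0)) ?gam' (zeta x a0 s) s' =
      L (b s') (shift_mult lam (s, a0)) ?gam' (zeta x a0 s) s'" for s'
    by (rule lagr_cong_plan) (simp add: shift_plan_def paste_plan_Cons)
  then have "(\<Sum>s'\<in>UNIV. Pr s s' * Dr ?gam' (zeta x a0 s) s') \<le>
      (\<Sum>s'\<in>UNIV. Pr s s' * L (shift_plan ?a s) (shift_mult lam (s, a0)) ?gam' (zeta x a0 s) s') + e"
    using b_approx by (intro expectation_le_add) simp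
  then have "beta * (\<Sum>s'\<in>UNIV. Pr s s' * Dr ?gam' (zeta x a0 s) s') \<le>
      beta * ((\<Sum>s'\<in>UNIV. Pr s s' * L (shift_plan ?a s) (shift_mult lam (s, a0)) ?gam' (zeta x a0 s) s') + e)"
    using beta_pos by (intro mult_left_mono) auto
  then show ?thesis
    using lagr_recursion[OF a x lam, of gam] by (simp add: algebra_simps)
qed

lemma lagr_paste_mult_le:
  assumes a: "a \<in> Plans x" and x: "x \<in> X"
    and mu: "\<And>a i. 0 \<le> mu a i" and Lam: "\<And>a s'. Lam a s' \<in> Mults s'"
    and Lam_approx: "\<And>s'. L (shift_plan a s) (Lam (a [s]) s') (\<lambda>i. gam i + mu (a [s]) i) (zeta x (a [s]) s) s'
      \<le> Dr (\<lambda>i. gam i + mu (a [s]) i) (zeta x (a [s]) s) s' + e"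
  shows "L a (paste_mult mu Lam) gam x s \<le> stage_lagr gam (mu (a [s])) x (a [s]) s +
      beta * (\<Sum>s'\<in>UNIV. Pr s s' * Dr (\<lambda>i. gam i + mu (a [s]) i) (zeta x (a [s]) s) s') + beta * e"
proof -
  let ?lam = "paste_mult mu Lam"
  let ?gam' = "\<lambda>i. gam i + mu (a [s]) i"
  have lam: "?lam \<in> Mults s" by (rule paste_mult_in_mults[OF mu Lam])
  have "L (shift_plan a s) (shift_mult ?lam (s, a [s])) ?gam' (zeta x (a [s]) s) s' =
      L (shift_plan a s) (Lam (a [s]) s') ?gam' (zeta x (a [s]) s) s'" for s'
    by (rule lagr_cong_mult) (simp add: shift_mult_def paste_mult_Cons)
  then have "(\<Sum>s'\<in>UNIV. Pr s s' * L (shift_plan a s) (shift_mult ?lam (s, a [s])) ?gam' (zeta x (a [s]) s) s')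
      \<le> (\<Sum>s'\<in>UNIV. Pr s s' * Dr ?gam' (zeta x (a [s]) s) s') + e"
    using Lam_approx by (intro expectation_le_add) simp
  then have "beta * (\<Sum>s'\<in>UNIV. Pr s s' * L (shift_plan a s) (shift_mult ?lam (s, a [s])) ?gam' (zeta x (a [s]) s) s')
      \<le> beta * ((\<Sum>s'\<in>UNIV. Pr s s' * Dr ?gam' (zeta x (a [s]) s) s') + e)"
    using beta_pos by (intro mult_left_mono) auto
  then show ?thesis
    using lagr_recursion[OF a x lam, of gam] by (simp add: algebra_simps)
qed

lemma bellman_le_Dtil:
  assumes x: "x \<in> X"
  shows "(SUP a0\<in>{a\<in>Act. 0 \<le> p x a s}. INF l\<in>{l. \<forall>i. 0 \<le> l i}. bellman_obj gam x s a0 l) \<le> D gam x s"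
  unfolding Dtil_def[of Pr beta Act zeta p r g gbar gam x s]
proof (intro INF_greatest SUP_least)
  fix lam a0 assume lam: "lam \<in> Mults s" and a0: "a0 \<in> {a\<in>Act. 0 \<le> p x a s}"
  let ?gam' = "\<lambda>i. gam i + lam [(s, a0)] i"
  let ?x' = "zeta x a0 s"
  let ?v = "stage_lagr gam (lam [(s, a0)]) x a0 s + beta * (\<Sum>s'\<in>UNIV. Pr s s' * Dr ?gam' ?x' s')"
  have x': "?x' \<in> X" using zeta_X[OF x] a0 by simp
  obtain c where c: "c \<in> Plans x" using feasible_plan_exists[OF x] by blast
  have "ereal ?v \<le> (SUP a\<in>Plans x. ereal (L a lam gam x s))"
  proof (rule ereal_le_epsilon2)
    fix e :: real assume e: "0 < e"
    have "\<forall>s'. \<exists>b. b \<in> Plans ?x' \<and> Dr ?gam' ?x' s' \<le> L b (shift_mult lam (s, a0)) ?gam' ?x' s' + e"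
      using Dtil_approx_plan[OF x' shift_mult_in_mults[OF lam] e] a0 by blast
    from choice[OF this] obtain b where b: "\<And>s'. b s' \<in> Plans ?x'"
      and b_approx: "\<And>s'. Dr ?gam' ?x' s' \<le> L (b s') (shift_mult lam (s, a0)) ?gam' ?x' s' + e"
      by blast
    have a: "paste_plan s a0 b c \<in> Plans x"
      using paste_plan_in_plans[OF x _ _ b c] a0 by simp
    have "?v - beta * e \<le> L (paste_plan s a0 b c) lam gam x s"
      using lagr_paste_plan_ge[OF x _ _ lam b c b_approx] a0 by simp
    moreover have "beta * e \<le> e"
      using beta_less_1 e by (simp add: mult_left_le_one_le)
    ultimately have "ereal ?v \<le> ereal (L (paste_plan s a0 b c) lam gam x s) + ereal e"
      by simp
    also have "\<dots> \<le> (SUP a\<in>Plans x. ereal (L a lam gam x s)) + ereal e"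
      by (intro add_right_mono SUP_upper a)
    finally show "ereal ?v \<le> (SUP a\<in>Plans x. ereal (L a lam gam x s)) + ereal e" .
  qed
  moreover have "lam [(s, a0)] \<in> {l. \<forall>i. 0 \<le> l i}"
    using lam by (simp add: mem_mults_iff)
  ultimately show "(INF l\<in>{l. \<forall>i. 0 \<le> l i}. bellman_obj gam x s a0 l) \<le>
      (SUP a\<in>Plans x. ereal (L a lam gam x s))"
    using bellman_obj_real[OF x, where a=a0 and gam=gam and s=s] a0 by (intro INF_lower2) auto
qed

lemma bellman_mults_below:
  assumes x: "x \<in> X"
    and below: "(SUP a0\<in>{a\<in>Act. 0 \<le> p x a s}. INF l\<in>{l. \<forall>i. 0 \<le> l i}. bellman_obj gam x s a0 l) < ereal w"
  obtains l0 where "\<And>a0 i. 0 \<le> l0 a0 i"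
    and "\<And>a0. a0 \<in> Act \<Longrightarrow> 0 \<le> p x a0 s \<Longrightarrow> stage_lagr gam (l0 a0) x a0 s +
      beta * (\<Sum>s'\<in>UNIV. Pr s s' * Dr (\<lambda>i. gam i + l0 a0 i) (zeta x a0 s) s') < w"
proof -
  have "\<exists>l. (\<forall>i. 0 \<le> l i) \<and> (a0 \<in> {a\<in>Act. 0 \<le> p x a s} \<longrightarrow> bellman_obj gam x s a0 l < ereal w)" for a0
  proof (cases "a0 \<in> {a\<in>Act. 0 \<le> p x a s}")
    case True
    have "(INF l\<in>{l. \<forall>i. 0 \<le> l i}. bellman_obj gam x s a0 l) < ereal w"
      using SUP_upper[OF True] below by (rule le_less_trans)
    then show ?thesis by (auto simp: INF_less_iff)
  qed (auto intro: exI[of _ "\<lambda>_. 0"])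
  then obtain l0 where "\<forall>a0. (\<forall>i. 0 \<le> l0 a0 i) \<and>
      (a0 \<in> {a\<in>Act. 0 \<le> p x a s} \<longrightarrow> bellman_obj gam x s a0 (l0 a0) < ereal w)"
    using choice[of "\<lambda>a0 l. (\<forall>i. 0 \<le> l i) \<and>
      (a0 \<in> {a\<in>Act. 0 \<le> p x a s} \<longrightarrow> bellman_obj gam x s a0 l < ereal w)"] by blast
  then have l0: "\<forall>a0. (\<forall>i. 0 \<le> l0 a0 i) \<and> (a0 \<in> Act \<and> 0 \<le> p x a0 s \<longrightarrow>
      stage_lagr gam (l0 a0) x a0 s +
      beta * (\<Sum>s'\<in>UNIV. Pr s s' * Dr (\<lambda>i. gam i + l0 a0 i) (zeta x a0 s) s') < w)"
    by (simp add: bellman_obj_real[OF x])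
  show ?thesis
    by (rule that[of l0]) (use l0 in auto)
qed

lemma approx_mults_exist:
  assumes x: "x \<in> X" and d: "0 < d"
  obtains Lam where "\<And>a0 s'. Lam a0 s' \<in> Mults s'"
    and "\<And>a0 s' b. a0 \<in> Act \<Longrightarrow> b \<in> Plans (zeta x a0 s) \<Longrightarrow>
      L b (Lam a0 s') (G a0) (zeta x a0 s) s' \<le> Dr (G a0) (zeta x a0 s) s' + d"
proof -
  have approx: "\<exists>lam\<in>Mults s'. a0 \<in> Act \<longrightarrow>
      (\<forall>b\<in>Plans (zeta x a0 s). L b lam (G a0) (zeta x a0 s) s' \<le> Dr (G a0) (zeta x a0 s) s' + d)" for a0 s'
    using Dtil_approx_mult[OF zeta_X[OF x] d] zero_in_mults by blast
  have "\<forall>a0. \<exists>f. \<forall>s'. f s' \<in> Mults s' \<and> (a0 \<in> Act \<longrightarrow>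
      (\<forall>b\<in>Plans (zeta x a0 s). L b (f s') (G a0) (zeta x a0 s) s' \<le> Dr (G a0) (zeta x a0 s) s' + d))"
  proof (intro allI choice)
    fix a0 s'
    show "\<exists>lam. lam \<in> Mults s' \<and> (a0 \<in> Act \<longrightarrow>
        (\<forall>b\<in>Plans (zeta x a0 s). L b lam (G a0) (zeta x a0 s) s' \<le> Dr (G a0) (zeta x a0 s) s' + d))"
      using approx[of s' a0] by blast
  qed
  from choice[OF this] obtain Lam where Lam: "\<forall>a0 s'. Lam a0 s' \<in> Mults s' \<and> (a0 \<in> Act \<longrightarrow>
      (\<forall>b\<in>Plans (zeta x a0 s). L b (Lam a0 s') (G a0) (zeta x a0 s) s' \<le> Dr (G a0) (zeta x a0 s) s' + d))"
    by blast
  show ?thesis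
    by (rule that[of Lam]) (use Lam in auto)
qed

lemma Dtil_le_bellman:
  assumes x: "x \<in> X"
  shows "D gam x s \<le> (SUP a0\<in>{a\<in>Act. 0 \<le> p x a s}. INF l\<in>{l. \<forall>i. 0 \<le> l i}. bellman_obj gam x s a0 l)"
    (is "_ \<le> ?R")
proof (rule ereal_le_real)
  fix z assume z: "?R \<le> ereal z"
  show "D gam x s \<le> ereal z"
  proof (rule ereal_le_epsilon2)
    fix e :: real assume e: "0 < e"
    have below: "?R < ereal (z + e / 2)" using z e by (simp add: le_less_trans)
    obtain l0 where l0: "\<And>a0 i. 0 \<le> l0 a0 i"
      and l0_below: "\<And>a0. a0 \<in> Act \<Longrightarrow> 0 \<le> p x a0 s \<Longrightarrow> stage_lagr gam (l0 a0) x a0 s +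
        beta * (\<Sum>s'\<in>UNIV. Pr s s' * Dr (\<lambda>i. gam i + l0 a0 i) (zeta x a0 s) s') < z + e / 2"
      using bellman_mults_below[OF x below] by blast
    obtain Lam where Lam: "\<And>a0 s'. Lam a0 s' \<in> Mults s'"
      and Lam_approx: "\<And>a0 s' b. a0 \<in> Act \<Longrightarrow> b \<in> Plans (zeta x a0 s) \<Longrightarrow>
        L b (Lam a0 s') (\<lambda>i. gam i + l0 a0 i) (zeta x a0 s) s' \<le>
        Dr (\<lambda>i. gam i + l0 a0 i) (zeta x a0 s) s' + e / 2"
      using approx_mults_exist[OF x, where d="e / 2" and s=s and G="\<lambda>a0 i. gam i + l0 a0 i"] e
      by auto
    have "L a (paste_mult l0 Lam) gam x s \<le> z + e" if a: "a \<in> Plans x" for a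
    proof -
      have a0: "a [s] \<in> Act" "0 \<le> p x (a [s]) s"
        using plans_Act[OF a] plans_p[OF a, of "[s]"] by simp_all
      have "beta * (e / 2) \<le> e / 2"
        using beta_less_1 e by (simp add: mult_left_le_one_le)
      then show ?thesis
        using lagr_paste_mult_le[where mu=l0 and Lam=Lam, OF a x l0 Lam
            Lam_approx[OF a0(1) shift_plan_in_plans[OF a]]]
          l0_below[OF a0]
        by linarith
    qed
    then have "(SUP a\<in>Plans x. ereal (L a (paste_mult l0 Lam) gam x s)) \<le> ereal (z + e)"
      by (intro SUP_least) simp
    moreover have "D gam x s \<le> (SUP a\<in>Plans x. ereal (L a (paste_mult l0 Lam) gam x s))"
      unfolding Dtil_def[of Pr beta Act zeta p r g gbar gam x s]
      by (rule INF_lower[OF paste_mult_in_mults[OF l0 Lam]])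
    ultimately show "D gam x s \<le> ereal z + ereal e"
      by simp
  qed
qed

lemma Dtil_bellman:
  assumes "x \<in> X"
  shows "D gam x s = (SUP a0\<in>{a\<in>Act. 0 \<le> p x a s}. INF l\<in>{l. \<forall>i. 0 \<le> l i}. bellman_obj gam x s a0 l)"
  using Dtil_le_bellman[OF assms] bellman_le_Dtil[OF assms] by (rule antisym)

end

theorem theorem3p3:
  fixes Pr :: "'s::finite \<Rightarrow> 's \<Rightarrow> real"
    and beta :: real
    and Act :: "'act set"
    and X :: "'x set"
    and zeta :: "'x \<Rightarrow> 'act \<Rightarrow> 's \<Rightarrow> 'x"
    and p r :: "'x \<Rightarrow> 'act \<Rightarrow> 's \<Rightarrow> real"
    and g :: "'i::finite \<Rightarrow> 'x \<Rightarrow> 'act \<Rightarrow> 's \<Rightarrow> real"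
    and gbar :: "'i \<Rightarrow> real"
    and gam :: "'i \<Rightarrow> real"
    and x :: 'x and s :: 's
  assumes Pr_pos: "\<And>s s'. Pr s s' > 0"
    and Pr_sum: "\<And>s. (\<Sum>s'\<in>UNIV. Pr s s') = 1"
    and Act_fin: "finite Act"
    and X_count: "countable X"
    and zeta_X: "\<And>x a s. x \<in> X \<Longrightarrow> a \<in> Act \<Longrightarrow> zeta x a s \<in> X"
    and beta: "0 < beta" "beta < 1"
    and r_bdd: "\<exists>B. \<forall>x\<in>X. \<forall>a\<in>Act. \<forall>s. \<bar>r x a s\<bar> \<le> B"
    and g_bdd: "\<And>i. \<exists>B. \<forall>x\<in>X. \<forall>a\<in>Act. \<forall>s. \<bar>g i x a s\<bar> \<le> B"
    and feas: "\<And>x0 s0. x0 \<in> X \<Longrightarrow> \<exists>a. feasible Pr beta Act zeta p g gbar x0 s0 a"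
    and x: "x \<in> X"
    and gam: "\<And>i. gam i \<ge> 0"
  shows "Dtil Pr beta Act zeta p r g gbar gam x s =
    (SUP a\<in>{a\<in>Act. p x a s \<ge> 0}. INF lam\<in>{lam :: 'i \<Rightarrow> real. \<forall>i. lam i \<ge> 0}.
       ereal (r x a s + (\<Sum>i\<in>UNIV. gam i * g i x a s + lam i * (g i x a s - gbar i)))
       + ereal beta * (\<Sum>s'\<in>UNIV. ereal (Pr s s') *
            Dtil Pr beta Act zeta p r g gbar (\<lambda>i. gam i + lam i) (zeta x a s) s'))"
proof -
  interpret constrained_dp Pr beta Act X zeta p r g gbar
    by unfold_locales (use Pr_pos Pr_sum Act_fin zeta_X beta r_bdd g_bdd feas in auto)
  show ?thesis
    using Dtil_bellman[OF x, of gam s] unfolding stage_lagr_def .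
qed

end
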